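(* Let $k\ge 100$ be an integer and let the roots of $f_k(X)=X^k-X^{k-1}-\cdots-X-1$ be $\alpha_1,\ldots,\alpha_{k-1},\alpha_k$, where $\alpha_k$ is the unique real root greater than $1$. Then for all distinct $i,j\in\{1,\ldots,k-1\}$, $$\frac{k^2}{13000\,e^3}<|\alpha_i-\alpha_j|^2\prod_{\substack{1\le \ell\le k-1\\ \ell\ne i,j}}|\alpha_i-\alpha_\ell|\,|\alpha_j-\alpha_\ell|.$$
   Context: $f_k(X)=X^k-X^{k-1}-\cdots-X-1$ has exactly one root outside the closed unit disk, denoted $\alpha_k$, which is real and larger than $1$; the other roots $\alpha_1,\ldots,\alpha_{k-1}$ have absolute value less than $1$, and all roots are distinct. *)

theory Defs
  imports "HOL-Analysis.Analysis" "HOL-Computational_Algebra.Polynomial"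
begin

definition fk :: "nat \<Rightarrow> complex poly" where
  "fk k = monom 1 k - (\<Sum>i<k. monom 1 i)"

text \<open>The roots alpha_1, ..., alpha_(k-1): the roots of f_k other than the dominant real
root alpha_k, i.e. the roots inside the open unit disk.\<close>
definition small_roots :: "nat \<Rightarrow> complex set" where
  "small_roots k = {z. poly (fk k) z = 0 \<and> cmod z < 1}"

end

theory Submission
  imports Defs "HOL-Computational_Algebra.Fundamental_Theorem_Algebra"
begin

text \<open>
  Every root \<open>z\<close> of \<open>f\<^sub>k\<close> satisfies \<open>z\<^sup>k (z - 2) = -1\<close>, because
  \<open>(X - 1) f\<^sub>k = X\<^bsup>k+1\<^esup> - 2X\<^sup>k + 1\<close>. For a root \<open>a\<close> in the unit disk this gives
  \<open>|a|\<^sup>k \<ge> 1/3\<close>, and differentiating the identity gives \<open>|f\<^sub>k'(a)| \<ge> (k - 1)/6\<close>;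
  in particular these roots are simple. Roots outside the disk have modulus at least \<open>9/5\<close>
  (Bernoulli's inequality). As the product of all roots has modulus \<open>|f\<^sub>k(0)| = 1\<close> and the
  roots inside the disk contribute at least \<open>1/3\<close>, the remaining roots contribute at most \<open>3\<close>,
  counted with multiplicity. Now \<open>f\<^sub>k'(a) = \<Prod>\<^bsub>z \<noteq> a\<^esub> (a - z)\<^bsup>ord z\<^esup>\<close>, and
  \<open>|a - z| \<le> 1 + |z| \<le> |z|\<^sup>2\<close> for the large roots, so
  \<open>\<Prod>\<^bsub>z \<noteq> a\<^esub> |a - z| \<ge> (k - 1)/54\<close> over the small roots. The product in the
  theorem is exactly the product of these two quantities for \<open>a = \<alpha>\<^sub>i\<close> and \<open>a = \<alpha>\<^sub>j\<close>.
\<close>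

lemma norm_poly_0_eq_prod_roots:
  fixes p :: "complex poly"
  assumes "lead_coeff p = 1"
  shows "cmod (poly p 0) = (\<Prod>z | poly p z = 0. cmod z ^ order z p)"
proof -
  have "p = (\<Prod>z | poly p z = 0. [:-z, 1:] ^ order z p)"
    using complex_poly_decompose[of p] assms by simp
  then have "poly p 0 = poly (\<Prod>z | poly p z = 0. [:-z, 1:] ^ order z p) 0"
    by (rule arg_cong)
  also have "\<dots> = (\<Prod>z | poly p z = 0. (- z) ^ order z p)"
    by (simp add: poly_prod)
  finally show ?thesis by (simp add: prod_norm[symmetric] norm_power)
qed

lemma poly_pderiv_at_simple_root:
  fixes p :: "complex poly"
  assumes "lead_coeff p = 1" and "order a p = 1"
  shows "poly (pderiv p) a = (\<Prod>z \<in> {z. poly p z = 0} - {a}. (a - z) ^ order z p)"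
proof -
  define R where "R = {z. poly p z = 0}"
  define Q where "Q = (\<Prod>z \<in> R - {a}. [:-z, 1:] ^ order z p)"
  have "p \<noteq> 0" using assms(1) by auto
  then have "finite R"
    unfolding R_def by (rule poly_roots_finite)
  have "a \<in> R"
    using assms(2) \<open>p \<noteq> 0\<close> by (simp add: R_def order_root)
  have "p = (\<Prod>z \<in> R. [:-z, 1:] ^ order z p)"
    using complex_poly_decompose[of p] assms(1) by (simp add: R_def)
  also have "\<dots> = [:-a, 1:] * Q"
    unfolding Q_def by (subst prod.remove[OF \<open>finite R\<close> \<open>a \<in> R\<close>]) (simp add: assms(2))
  finally have "p = [:-a, 1:] * Q" .
  then have "poly (pderiv p) a = poly (pderiv ([:-a, 1:] * Q)) a"
    by simp
  also have "\<dots> = poly Q a"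
    unfolding pderiv_mult by (simp add: pderiv_pCons)
  finally show ?thesis by (simp add: Q_def R_def poly_prod)
qed

lemma poly_fk: "poly (fk k) x = x ^ k - (\<Sum>i<k. x ^ i)"
  by (simp add: fk_def poly_sum poly_monom)

lemma coeff_fk: "coeff (fk k) n = (if n = k then 1 else if n < k then -1 else 0)"
  by (simp add: fk_def coeff_sum coeff_monom sum.delta)

lemma degree_fk: "degree (fk k) = k"
  by (rule antisym) (auto intro: degree_le le_degree simp: coeff_fk)

lemma lead_coeff_fk: "lead_coeff (fk k) = 1"
  by (simp add: degree_fk coeff_fk)

lemma fk_nonzero: "fk k \<noteq> 0"
  using lead_coeff_fk[of k] by auto

lemma poly_fk_0: "k \<ge> 1 \<Longrightarrow> poly (fk k) 0 = -1"
  by (simp add: poly_fk power_0_left sum.delta)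

lemma X_minus_1_times_fk:
  "[:-1, 1:] * fk k = monom 1 (Suc k) - smult 2 (monom 1 k) + 1"
proof (rule poly_ext)
  fix x :: complex
  have "(x - 1) * (\<Sum>i<k. x ^ i) = x ^ k - 1"
    using power_diff_1_eq[of x k] by simp
  then show "poly ([:-1, 1:] * fk k) x = poly (monom 1 (Suc k) - smult 2 (monom 1 k) + 1) x"
    by (simp add: poly_fk poly_monom algebra_simps)
qed

lemma root_fk_power_eq:
  assumes "poly (fk k) z = 0"
  shows "z ^ k * (z - 2) = -1"
proof -
  have "poly ([:-1, 1:] * fk k) z = 0"
    using assms by simp
  then have "z ^ Suc k - 2 * z ^ k + 1 = 0"
    by (simp only: X_minus_1_times_fk) (simp add: poly_monom)
  then show ?thesis
    by (simp add: algebra_simps)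
qed

lemma pderiv_fk_at_root:
  assumes "poly (fk k) a = 0" and "k = Suc m"
  shows "(a - 1) * poly (pderiv (fk k)) a = a ^ m * ((k + 1) * a - 2 * k)"
proof -
  have "(a - 1) * poly (pderiv (fk k)) a = poly (pderiv ([:-1, 1:] * fk k)) a"
    unfolding pderiv_mult using assms(1) by (simp add: pderiv_pCons algebra_simps)
  also have "\<dots> = (k + 1) * a ^ k - 2 * k * a ^ m"
    unfolding X_minus_1_times_fk assms(2)
    by (simp add: pderiv_diff pderiv_add pderiv_smult pderiv_monom poly_monom)
  finally show ?thesis
    unfolding assms(2) by (simp add: algebra_simps)
qed

lemma small_root_fk_norm_power_ge:
  assumes "poly (fk k) a = 0" and "cmod a < 1"
  shows "1/3 \<le> cmod a ^ k"
proof -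
  have "1 = cmod a ^ k * cmod (a - 2)"
    using arg_cong[OF root_fk_power_eq[OF assms(1)], of cmod] by (simp add: norm_mult norm_power)
  also have "\<dots> \<le> cmod a ^ k * 3"
    using norm_triangle_ineq4[of a 2] assms(2) by (intro mult_left_mono) auto
  finally show ?thesis by simp
qed

lemma norm_pderiv_fk_at_small_root:
  assumes "poly (fk k) a = 0" and "cmod a < 1" and "k \<ge> 1"
  shows "(real k - 1) / 6 \<le> cmod (poly (pderiv (fk k)) a)"
proof -
  obtain m where k: "k = Suc m"
    using assms(3) by (cases k) auto
  have "1/3 \<le> cmod a ^ k"
    using small_root_fk_norm_power_ge[OF assms(1,2)] .
  also have "\<dots> \<le> cmod a ^ m"
    using assms(2) k by (intro power_decreasing) auto
  finally have pow: "1/3 \<le> cmod (a ^ m)"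
    by (simp add: norm_power)
  have lin: "real k - 1 \<le> cmod ((of_nat k + 1) * a - 2 * of_nat k)"
  proof -
    have "cmod ((of_nat k + 1) * a) = real (k + 1) * cmod a"
      using norm_of_nat[of "k + 1", where 'a = complex] by (simp add: norm_mult add.commute)
    also have "\<dots> \<le> real (k + 1)"
      using assms(2) by (intro mult_left_le) auto
    finally have "cmod ((of_nat k + 1) * a) \<le> real (k + 1)" .
    moreover have "cmod (2 * of_nat k :: complex) - cmod ((of_nat k + 1) * a)
        \<le> cmod ((of_nat k + 1) * a - 2 * of_nat k)"
      by (metis norm_minus_commute norm_triangle_ineq2)
    ultimately show ?thesis by (simp add: norm_mult)
  qed
  have "(real k - 1) / 3 \<le> cmod (a ^ m) * cmod ((of_nat k + 1) * a - 2 * of_nat k)"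
    using mult_mono[OF pow lin] assms(3) by simp
  also have "\<dots> = cmod (a - 1) * cmod (poly (pderiv (fk k)) a)"
    using pderiv_fk_at_root[OF assms(1) k] by (metis norm_mult)
  also have "\<dots> \<le> 2 * cmod (poly (pderiv (fk k)) a)"
    using norm_triangle_ineq4[of a 1] assms(2) by (intro mult_right_mono) auto
  finally show ?thesis by simp
qed

lemma order_fk_small_root:
  assumes "poly (fk k) a = 0" and "cmod a < 1" and "k \<ge> 2"
  shows "order a (fk k) = 1"
proof -
  have "poly (pderiv (fk k)) a \<noteq> 0"
    using norm_pderiv_fk_at_small_root[OF assms(1,2)] assms(3) by fastforce
  then have "order a (pderiv (fk k)) = 0"
    by (simp add: order_0I)
  then show ?thesis
    using order_pderiv[OF fk_nonzero assms(1)] by simp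
qed

lemma large_root_fk_norm_ge:
  assumes root: "poly (fk k) z = 0" and "1 \<le> cmod z" and "k \<ge> 100"
  shows "9/5 \<le> cmod z"
proof (rule ccontr)
  assume "\<not> 9/5 \<le> cmod z"
  have eq: "cmod z ^ k * cmod (2 - z) = 1"
    using arg_cong[OF root_fk_power_eq[OF root], of cmod]
    by (simp add: norm_mult norm_power norm_minus_commute)
  show False
  proof (cases "cmod z = 1")
    case True
    then have "cmod (2 - z) = 1"
      using eq by simp
    with True have "Re z ^ 2 + Im z ^ 2 = 1" and "(2 - Re z) ^ 2 + Im z ^ 2 = 1"
      by (simp_all add: cmod_def)
    then have "z = 1"
      by (simp add: complex_eq_iff power2_eq_square algebra_simps)
    with root assms(3) show False
      by (simp add: poly_fk)
  next
    case False
    define e where "e = cmod z - 1"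
    have e: "0 < e" "e < 4/5"
      using False assms(2) \<open>\<not> 9/5 \<le> cmod z\<close> by (auto simp: e_def)
    \<comment> \<open>\<open>|z|\<^sup>k (2 - |z|) \<le> 1\<close>, but Bernoulli makes this product exceed \<open>1\<close> for \<open>1 < |z| < 9/5\<close>\<close>
    have "1 < (1 + real k * e) * (1 - e)"
    proof -
      have "real k * e \<le> real k * (4/5)"
        using e by (intro mult_left_mono) auto
      moreover have "100 \<le> real k"
        using assms(3) by simp
      ultimately have "0 < real k - 1 - real k * e"
        by linarith
      then have "0 < e * (real k - 1 - real k * e)"
        using e by simp
      then show ?thesis by (simp add: algebra_simps)
    qed
    also have "\<dots> \<le> (1 + e) ^ k * (1 - e)"
      using e by (intro mult_right_mono Bernoulli_inequality) auto
    also have "\<dots> = cmod z ^ k * (2 - cmod z)"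
      by (simp add: e_def)
    also have "\<dots> \<le> cmod z ^ k * cmod (2 - z)"
      using norm_triangle_ineq2[of 2 z] by (intro mult_left_mono) auto
    finally show False
      using eq by simp
  qed
qed

definition large_roots :: "nat \<Rightarrow> complex set" where
  "large_roots k = {z. poly (fk k) z = 0 \<and> 1 \<le> cmod z}"

lemma roots_fk_eq_small_Un_large:
  "{z. poly (fk k) z = 0} = small_roots k \<union> large_roots k"
  by (auto simp: small_roots_def large_roots_def)

lemma finite_roots_fk: "finite {z. poly (fk k) z = 0}"
  using fk_nonzero by (rule poly_roots_finite)

lemma finite_small_roots: "finite (small_roots k)"
  and finite_large_roots: "finite (large_roots k)"
  using finite_roots_fk[of k] by (simp_all add: roots_fk_eq_small_Un_large)

lemma card_small_roots_le: "card (small_roots k) \<le> k"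
proof -
  have "card (small_roots k) \<le> card {z. poly (fk k) z = 0}"
    using finite_roots_fk by (intro card_mono) (auto simp: small_roots_def)
  also have "\<dots> \<le> k"
    using card_poly_roots_bound[OF fk_nonzero] by (simp add: degree_fk)
  finally show ?thesis .
qed

lemma prod_norm_small_roots_ge:
  assumes "k \<ge> 1"
  shows "1/3 \<le> (\<Prod>z \<in> small_roots k. cmod z)"
proof -
  have "(1/3) ^ k \<le> (1/3 :: real) ^ card (small_roots k)"
    using card_small_roots_le by (intro power_decreasing) auto
  also have "\<dots> = (\<Prod>z \<in> small_roots k. 1/3)"
    by simp
  also have "\<dots> \<le> (\<Prod>z \<in> small_roots k. cmod z ^ k)"
    using small_root_fk_norm_power_ge by (intro prod_mono) (auto simp: small_roots_def)
  also have "\<dots> = (\<Prod>z \<in> small_roots k. cmod z) ^ k"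
    by (rule prod_power_distrib[symmetric])
  finally show ?thesis
    using assms by (simp add: prod_nonneg)
qed

lemma small_large_roots_disjoint: "small_roots k \<inter> large_roots k = {}"
  by (auto simp: small_roots_def large_roots_def)

lemma prod_norm_large_roots_le:
  assumes "k \<ge> 2"
  shows "(\<Prod>z \<in> large_roots k. cmod z ^ order z (fk k)) \<le> 3"
proof -
  let ?L = "\<Prod>z \<in> large_roots k. cmod z ^ order z (fk k)"
  have "1 = cmod (poly (fk k) 0)"
    using poly_fk_0 assms by simp
  also have "\<dots> = (\<Prod>z \<in> small_roots k \<union> large_roots k. cmod z ^ order z (fk k))"
    by (simp only: norm_poly_0_eq_prod_roots[OF lead_coeff_fk] roots_fk_eq_small_Un_large)
  also have "\<dots> = (\<Prod>z \<in> small_roots k. cmod z ^ order z (fk k)) * ?L"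
    using small_large_roots_disjoint
    by (rule prod.union_disjoint[OF finite_small_roots finite_large_roots])
  also have "(\<Prod>z \<in> small_roots k. cmod z ^ order z (fk k)) = (\<Prod>z \<in> small_roots k. cmod z)"
    using order_fk_small_root assms by (intro prod.cong) (auto simp: small_roots_def)
  finally have "1 = (\<Prod>z \<in> small_roots k. cmod z) * ?L" .
  also have "\<dots> \<ge> 1/3 * ?L"
    using prod_norm_small_roots_ge assms by (intro mult_right_mono) (auto simp: prod_nonneg)
  finally show ?thesis by simp
qed

lemma prod_dist_small_roots_ge:
  assumes "k \<ge> 100" and a: "a \<in> small_roots k"
  shows "(real k - 1) / 54 \<le> (\<Prod>z \<in> small_roots k - {a}. cmod (a - z))"
proof -
  let ?om = "\<lambda>z. order z (fk k)"
  let ?P = "\<Prod>z \<in> small_roots k - {a}. cmod (a - z)"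
  have root: "poly (fk k) a = 0" and "cmod a < 1"
    using a by (auto simp: small_roots_def)
  have "{z. poly (fk k) z = 0} - {a} = (small_roots k - {a}) \<union> large_roots k"
    using a by (auto simp: roots_fk_eq_small_Un_large large_roots_def small_roots_def)
  then have "poly (pderiv (fk k)) a
      = (\<Prod>z \<in> (small_roots k - {a}) \<union> large_roots k. (a - z) ^ ?om z)"
    using poly_pderiv_at_simple_root[OF lead_coeff_fk order_fk_small_root[OF root]] \<open>cmod a < 1\<close>
      assms(1) by simp
  also have "\<dots> = (\<Prod>z \<in> small_roots k - {a}. (a - z) ^ ?om z) * (\<Prod>z \<in> large_roots k. (a - z) ^ ?om z)"
    using small_large_roots_disjoint finite_small_roots finite_large_roots
    by (intro prod.union_disjoint) auto
  also have "(\<Prod>z \<in> small_roots k - {a}. (a - z) ^ ?om z) = (\<Prod>z \<in> small_roots k - {a}. a - z)"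
    using order_fk_small_root assms(1) by (intro prod.cong) (auto simp: small_roots_def)
  finally have "cmod (poly (pderiv (fk k)) a) = ?P * (\<Prod>z \<in> large_roots k. cmod (a - z) ^ ?om z)"
    by (simp add: norm_mult prod_norm[symmetric] norm_power)
  also have "\<dots> \<le> ?P * (\<Prod>z \<in> large_roots k. cmod z ^ ?om z) ^ 2"
  proof (intro mult_left_mono prod_nonneg)
    have "cmod (a - z) \<le> cmod z ^ 2" if "z \<in> large_roots k" for z
    proof -
      have "9/5 \<le> cmod z"
        using large_root_fk_norm_ge that assms(1) by (auto simp: large_roots_def)
      then have "9/5 * (4/5) \<le> cmod z * (cmod z - 1)"
        by (intro mult_mono) auto
      then have "1 + cmod z \<le> cmod z ^ 2"
        by (simp add: power2_eq_square algebra_simps)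
      then show ?thesis
        using norm_triangle_ineq4[of a z] \<open>cmod a < 1\<close> by simp
    qed
    then have "(\<Prod>z \<in> large_roots k. cmod (a - z) ^ ?om z)
        \<le> (\<Prod>z \<in> large_roots k. (cmod z ^ 2) ^ ?om z)"
      by (intro prod_mono) (auto intro: power_mono)
    also have "\<dots> = (\<Prod>z \<in> large_roots k. cmod z ^ ?om z) ^ 2"
      by (simp add: prod_power_distrib flip: power_mult) (simp add: mult.commute)
    finally show "(\<Prod>z \<in> large_roots k. cmod (a - z) ^ ?om z)
        \<le> (\<Prod>z \<in> large_roots k. cmod z ^ ?om z) ^ 2" .
  qed (auto simp: prod_nonneg)
  also have "\<dots> \<le> ?P * 3 ^ 2"
    using prod_norm_large_roots_le assms(1)
    by (intro mult_left_mono power_mono) (auto simp: prod_nonneg)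
  finally show ?thesis
    using norm_pderiv_fk_at_small_root[OF root \<open>cmod a < 1\<close>] assms(1) by simp
qed

lemma norm_diff_squared_mult_prod_eq:
  fixes S :: "'a :: real_normed_vector set"
  assumes "finite S" and "a \<in> S" and "b \<in> S" and "a \<noteq> b"
  shows "norm (a - b) ^ 2 * (\<Prod>c \<in> S - {a, b}. norm (a - c) * norm (b - c))
    = (\<Prod>z \<in> S - {a}. norm (a - z)) * (\<Prod>z \<in> S - {b}. norm (b - z))"
proof -
  have remove: "(\<Prod>z \<in> S - {x}. norm (x - z)) = norm (x - y) * (\<Prod>z \<in> S - {x, y}. norm (x - z))"
    if "x \<in> S" and "y \<in> S" and "x \<noteq> y" for x y
    using prod.remove[of "S - {x}" y] that assms(1)
    by (simp add: insert_commute Diff_insert2[symmetric])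
  show ?thesis
    using remove[of a b] remove[of b a] assms(2-4)
    by (simp add: prod.distrib power2_eq_square insert_commute norm_minus_commute mult_ac)
qed

theorem mainTheorem5:
  fixes k :: nat and a b :: complex
  assumes "k \<ge> 100"
    and "a \<in> small_roots k" and "b \<in> small_roots k" and "a \<noteq> b"
  shows "real k ^ 2 / (13000 * exp 3) <
    cmod (a - b) ^ 2 * (\<Prod>c \<in> small_roots k - {a, b}. cmod (a - c) * cmod (b - c))"
proof -
  have k: "100 \<le> real k"
    using assms(1) by simp
  have "real k ^ 2 / (13000 * exp 3) \<le> real k ^ 2 / 13000"
    by (intro divide_left_mono) auto
  also have "\<dots> < (real k / 108) ^ 2"
    using k by (simp add: power2_eq_square)
  also have "\<dots> \<le> ((real k - 1) / 54) ^ 2"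
    using k by (intro power_mono) (auto simp: field_simps)
  also have "\<dots> \<le> (\<Prod>z \<in> small_roots k - {a}. cmod (a - z)) * (\<Prod>z \<in> small_roots k - {b}. cmod (b - z))"
    unfolding power2_eq_square using k
    by (intro mult_mono prod_dist_small_roots_ge assms prod_nonneg) auto
  finally show ?thesis
    using norm_diff_squared_mult_prod_eq[OF finite_small_roots assms(2-4)] by simp
qed

end
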